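(* Let $\Omega=[\alpha,\beta]\subset\mathbb{R}$ be a compact interval with $\alpha<\beta$, let $p_1,\dots,p_n\in(\alpha,\beta)$, and let $k_1,k_2,k_3,\dots\in\{1,\dots,n\}$ be a sequence in which every value $1,\dots,n$ occurs infinitely many times. Define the relaxation $$F_m=G_{p_{k_m}}G_{p_{k_{m-1}}}\cdots G_{p_{k_1}}0_\Omega,\qquad m\ge 1.$$ Then the sequence $(F_m)$ stabilizes: there exists $m_0$ such that $F_m=F_{m_0}$ for all $m\ge m_0$.
   Context: Let $\Omega=[\alpha,\beta]$ be a compact interval with $\alpha<\beta$ and $\Omega^\circ=(\alpha,\beta)$. An $\Omega$-tropical series is a function $F:\Omega\to[0,\infty)$ with $F(\alpha)=F(\beta)=0$ that can be written as $F(z)=\inf_{v\in\mathbb{Z}}(a_v+zv)$ for some real numbers $a_v$. Its canonical coefficients are the smallest possible such coefficients, namely $a_v=\sup_{z\in\Omega}(F(z)-zv)$. The function $0_\Omega$ is the $\Omega$-tropical series identically equal to $0$ on $\Omega$. For $p\in\Omega^\circ$ the operator $G_p$ on $\Omega$-tropical series is defined as follows: if $F$ is not differentiable at $p$, then $G_pF=F$; otherwise there is a unique $w\in\mathbb{Z}$ with $F(z)=a_w+zw$ for $z$ in a neighbourhood of $p$ (where $a_v$ are the canonical coefficients of $F$), and $G_pF(z)=\inf_{v\in\mathbb{Z}}(b_v+zv)$ for $z\in\Omega$, where $b_v=a_v$ for $v\neq w$ and $b_w=\min_{v\in\mathbb{Z}\setminus\{w\}}(a_v+pv)-pw$. *)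

theory Defs
  imports "HOL-Analysis.Analysis"
begin

text \<open>An \<open>\<Omega>\<close>-tropical series on \<open>\<Omega> = [\<alpha>,\<beta>]\<close>. Functions are of type real => real;
  only their values on \<open>{\<alpha>..\<beta>}\<close> are relevant.\<close>
definition tropical_series :: "real \<Rightarrow> real \<Rightarrow> (real \<Rightarrow> real) \<Rightarrow> bool" where
  "tropical_series \<alpha> \<beta> F \<longleftrightarrow>
     (\<forall>z\<in>{\<alpha>..\<beta>}. F z \<ge> 0) \<and> F \<alpha> = 0 \<and> F \<beta> = 0 \<and>
     (\<exists>a :: int \<Rightarrow> real. \<forall>z\<in>{\<alpha>..\<beta>}.
        bdd_below (range (\<lambda>v. a v + z * of_int v)) \<and> F z = (INF v. a v + z * of_int v))"

definition canon_coeff :: "real \<Rightarrow> real \<Rightarrow> (real \<Rightarrow> real) \<Rightarrow> int \<Rightarrow> real" where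
  "canon_coeff \<alpha> \<beta> F v = (SUP z\<in>{\<alpha>..\<beta>}. F z - z * of_int v)"

definition local_slope :: "real \<Rightarrow> real \<Rightarrow> (real \<Rightarrow> real) \<Rightarrow> real \<Rightarrow> int" where
  "local_slope \<alpha> \<beta> F p = (THE w. \<exists>e>0. \<forall>z. \<bar>z - p\<bar> < e \<longrightarrow>
        F z = canon_coeff \<alpha> \<beta> F w + z * of_int w)"

definition G_op :: "real \<Rightarrow> real \<Rightarrow> real \<Rightarrow> (real \<Rightarrow> real) \<Rightarrow> (real \<Rightarrow> real)" where
  "G_op \<alpha> \<beta> p F =
    (if \<not> F differentiable (at p) then F
     else (let a = canon_coeff \<alpha> \<beta> F;
               w = local_slope \<alpha> \<beta> F p;
               b = (\<lambda>v. if v = w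
                         then (INF u\<in>UNIV - {w}. a u + p * of_int u) - p * of_int w
                         else a v)
           in (\<lambda>z. INF v. b v + z * of_int v)))"

fun relax :: "real \<Rightarrow> real \<Rightarrow> (nat \<Rightarrow> real) \<Rightarrow> (nat \<Rightarrow> nat) \<Rightarrow> nat \<Rightarrow> (real \<Rightarrow> real)" where
  "relax \<alpha> \<beta> p k 0 = (\<lambda>_. 0)"
| "relax \<alpha> \<beta> p k (Suc m) = G_op \<alpha> \<beta> (p (k (Suc m))) (relax \<alpha> \<beta> p k m)"

end

theory Submission
  imports Defs
begin

text \<open>Every \<open>F\<^sub>m\<close> is the function \<open>z \<mapsto> - \<Sum>\<^sub>u \<mu>\<^sub>m(u) max 0 (z - u)\<close> of a finite chip
  configuration \<open>\<mu>\<^sub>m\<close> that is nonnegative inside \<open>(\<alpha>, \<beta>)\<close>. If \<open>p\<close> carries a chip, \<open>F\<^sub>m\<close> has a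
  kink at \<open>p\<close> and \<open>G\<^sub>p\<close> does nothing; otherwise \<open>G\<^sub>p\<close> removes the nearest chips \<open>l < p < r\<close>
  (the end points act as a reservoir) and adds chips at \<open>p\<close> and \<open>l + r - p\<close>, which raises
  \<open>F\<^sub>m\<close> by a tent of height \<open>d = min (p - l) (r - p)\<close> over \<open>[l, r]\<close>.

  All \<open>F\<^sub>m\<close> stay below the function of the configuration with a chip on every \<open>p\<^sub>i\<close>, so the
  potential \<open>\<Sum>\<^sub>i F\<^sub>m(p\<^sub>i)\<close> is bounded; it grows by at least \<open>d\<close> at each effective step, so only
  finitely many steps have \<open>d \<ge> \<epsilon>\<close>. Once \<open>d\<close> is below a third of the separation \<open>\<delta>\<close> of the
  marked points \<open>\<alpha>, \<beta>, p\<^sub>i\<close>, each step moves a free (unmarked) chip lying at distance \<open>d\<close> from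
  the marked points. The number of free chips then cannot increase, hence becomes constant,
  and from then on the distances of free chips to the marked points stay in a fixed finite
  set, which bounds \<open>d\<close> from below. So only finitely many steps are effective.\<close>

lemma differentiable_imp_slopes_le:
  fixes F :: "real \<Rightarrow> real"
  assumes "F differentiable at p"
    and right: "\<forall>\<^sub>F y in at_right p. F y \<le> F p + s * (y - p)"
    and left: "\<forall>\<^sub>F y in at_left p. F y \<le> F p + t * (y - p)"
  shows "t \<le> s"
proof -
  let ?q = "\<lambda>y. (F y - F p) / (y - p)"
  have D: "(F has_real_derivative deriv F p) (at p)"
    using assms(1) by (simp add: DERIV_deriv_iff_real_differentiable)
  have "(?q \<longlongrightarrow> deriv F p) (at_right p)" "(?q \<longlongrightarrow> deriv F p) (at_left p)"
    using has_field_derivative_at_within[OF D, of "{p<..}"] has_field_derivative_at_within[OF D, of "{..<p}"]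
    by (simp_all add: has_field_derivative_iff)
  moreover have "\<forall>\<^sub>F y in at_right p. ?q y \<le> s"
    using right eventually_at_right_less[of p]
    by eventually_elim (simp add: pos_divide_le_eq algebra_simps)
  moreover have "\<forall>\<^sub>F y in at_left p. t \<le> ?q y"
    using left eventually_at_left_real[of "p - 1" p, simplified]
    by eventually_elim (simp add: neg_le_divide_eq algebra_simps)
  ultimately have "deriv F p \<le> s" "t \<le> deriv F p"
    by (auto intro: tendsto_upperbound tendsto_lowerbound)
  then show ?thesis
    by linarith
qed

lemma has_real_derivative_locally_affine:
  assumes "0 < e" and "\<And>z. \<bar>z - p\<bar> < e \<Longrightarrow> F z = c + z * s"
  shows "(F has_real_derivative s) (at p)"
proof -
  have "((\<lambda>z. c + z * s) has_real_derivative s) (at p)"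
    by (auto intro!: derivative_eq_intros)
  then show ?thesis
  proof (rule has_field_derivative_transform_within_open[where S = "ball p e"])
    show "c + z * s = F z" if "z \<in> ball p e" for z
      using that assms(2)[of z] by (simp add: dist_real_def abs_minus_commute)
  qed (use assms(1) in auto)
qed

lemma finite_set_separated:
  fixes S :: "'a::metric_space set"
  assumes "finite S"
  shows "\<exists>\<delta>>0. \<forall>x\<in>S. \<forall>y\<in>S. x \<noteq> y \<longrightarrow> \<delta> \<le> dist x y"
proof -
  define D where "D = insert 1 {dist x y | x y. x \<in> S \<and> y \<in> S \<and> x \<noteq> y}"
  have "{dist x y | x y. x \<in> S \<and> y \<in> S \<and> x \<noteq> y} \<subseteq> (\<lambda>(x, y). dist x y) ` (S \<times> S)"
    by auto
  then have "finite D"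
    unfolding D_def using assms by (simp add: finite_subset)
  moreover have "\<forall>t\<in>D. 0 < t"
    unfolding D_def by auto
  ultimately have "0 < Min D"
    by (simp add: D_def Min_gr_iff)
  moreover have "Min D \<le> dist x y" if "x \<in> S" "y \<in> S" "x \<noteq> y" for x y
    using \<open>finite D\<close> that by (intro Min_le) (auto simp: D_def)
  ultimately show ?thesis
    by blast
qed

lemma infdist_separated_eq:
  assumes "x \<in> A" and "\<forall>y\<in>A. y \<noteq> x \<longrightarrow> \<delta> \<le> dist x y" and "dist u x < \<delta> / 2"
  shows "infdist u A = dist u x"
proof -
  have "dist u x \<le> dist u y" if "y \<in> A" for y
  proof (cases "y = x")
    case False
    then have "\<delta> \<le> dist x y"
      using assms(2) that by blast
    then show ?thesis
      using dist_triangle[of x y u] assms(3) by (simp add: dist_commute)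
  qed simp
  then show ?thesis
    using assms(1) by (metis antisym cINF_greatest empty_iff infdist_def infdist_le)
qed

lemma finite_if_bounded_card_below:
  fixes S :: "nat set"
  assumes "\<And>m. card {j\<in>S. j < m} \<le> N"
  shows "finite S"
proof (rule ccontr)
  assume "infinite S"
  then obtain B where B: "finite B" "card B = Suc N" "B \<subseteq> S"
    using infinite_arbitrarily_large by blast
  let ?m = "Suc (Max B)"
  have "B \<subseteq> {j\<in>S. j < ?m}"
    using B(1,3) Max_ge[OF B(1)] by (auto simp: less_Suc_eq_le)
  moreover have "finite {j\<in>S. j < ?m}"
    by (rule finite_subset[of _ "{..<?m}"]) auto
  ultimately have "card B \<le> card {j\<in>S. j < ?m}"
    by (rule card_mono[rotated])
  then show False
    using assms[of ?m] B(2) by simp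
qed

lemma eventually_const_if_antimono:
  fixes f :: "nat \<Rightarrow> nat"
  assumes "\<And>m. T \<le> m \<Longrightarrow> f (Suc m) \<le> f m"
  shows "\<exists>T'\<ge>T. \<forall>m\<ge>T'. f m = f T'"
  using assms
proof (induction "f T" arbitrary: T rule: less_induct)
  case less
  have le: "f m \<le> f T" if "T \<le> m" for m
    using that
  proof (induction rule: dec_induct)
    case (step n)
    then show ?case
      using less.prems[of n] by linarith
  qed simp
  show ?case
  proof (cases "\<forall>m\<ge>T. f m = f T")
    case True
    then show ?thesis
      by blast
  next
    case False
    then obtain m where m: "T \<le> m" "f m < f T"
      using le le_neq_implies_less by blast
    then have "\<exists>T'\<ge>m. \<forall>k\<ge>T'. f k = f T'"
      using less.prems by (intro less.hyps) auto
    then show ?thesis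
      using m(1) order_trans by blast
  qed
qed

section \<open>Chip configurations and their functions\<close>

definition ramp :: "real \<Rightarrow> real" where
  "ramp x = max 0 x"

definition supp :: "(real \<Rightarrow> int) \<Rightarrow> real set" where
  "supp \<mu> = {u. \<mu> u \<noteq> 0}"

definition divisor_fun :: "(real \<Rightarrow> int) \<Rightarrow> real \<Rightarrow> real" where
  "divisor_fun \<mu> z = - (\<Sum>u\<in>supp \<mu>. of_int (\<mu> u) * ramp (z - u))"

definition slope_left :: "(real \<Rightarrow> int) \<Rightarrow> real \<Rightarrow> int" where
  "slope_left \<mu> x = - (\<Sum>u\<in>supp \<mu>. if u < x then \<mu> u else 0)"

definition slope_right :: "(real \<Rightarrow> int) \<Rightarrow> real \<Rightarrow> int" where
  "slope_right \<mu> x = - (\<Sum>u\<in>supp \<mu>. if u \<le> x then \<mu> u else 0)"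

definition add_chips :: "real \<Rightarrow> int \<Rightarrow> (real \<Rightarrow> int) \<Rightarrow> (real \<Rightarrow> int)" where
  "add_chips x c \<mu> = \<mu>(x := \<mu> x + c)"

lemma of_int_slope_left:
  "real_of_int (slope_left \<mu> x) = - (\<Sum>u\<in>supp \<mu>. if u < x then real_of_int (\<mu> u) else 0)"
  unfolding slope_left_def by (simp add: of_int_sum if_distrib cong: if_cong)

lemma of_int_slope_right:
  "real_of_int (slope_right \<mu> x) = - (\<Sum>u\<in>supp \<mu>. if u \<le> x then real_of_int (\<mu> u) else 0)"
  unfolding slope_right_def by (simp add: of_int_sum if_distrib cong: if_cong)

lemma slope_left_eq_slope_right_plus:
  assumes "finite (supp \<mu>)"
  shows "slope_left \<mu> x = slope_right \<mu> x + \<mu> x"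
proof -
  have "(\<Sum>u\<in>supp \<mu>. if u \<le> x then \<mu> u else 0)
      = (\<Sum>u\<in>supp \<mu>. (if u < x then \<mu> u else 0) + (if u = x then \<mu> u else 0))"
    by (rule sum.cong) auto
  also have "\<dots> = (\<Sum>u\<in>supp \<mu>. if u < x then \<mu> u else 0) + \<mu> x"
    using assms by (simp add: sum.distrib supp_def)
  finally show ?thesis
    unfolding slope_left_def slope_right_def by simp
qed

lemma divisor_fun_minus_line:
  "divisor_fun \<mu> z - divisor_fun \<mu> x + (\<Sum>u\<in>supp \<mu>. if P u then of_int (\<mu> u) else 0) * (z - x)
     = (\<Sum>u\<in>supp \<mu>. of_int (\<mu> u) * ((if P u then z - x else 0) - ramp (z - u) + ramp (x - u)))"
proof -
  have "(\<Sum>u\<in>supp \<mu>. of_int (\<mu> u) * ((if P u then z - x else 0) - ramp (z - u) + ramp (x - u)))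
      = (\<Sum>u\<in>supp \<mu>. of_int (\<mu> u) * ramp (x - u) - of_int (\<mu> u) * ramp (z - u)
           + (if P u then real_of_int (\<mu> u) else 0) * (z - x))"
    by (rule sum.cong) (auto simp: algebra_simps)
  then show ?thesis
    unfolding divisor_fun_def by (simp add: sum.distrib sum_subtractf sum_distrib_right)
qed

lemma supp_add_chips: "supp (add_chips x c \<mu>) \<subseteq> insert x (supp \<mu>)"
  by (auto simp: supp_def add_chips_def)

lemma sum_supp_add_chips:
  fixes g :: "real \<Rightarrow> 'a::comm_ring_1"
  assumes "finite (supp \<mu>)"
  shows "(\<Sum>u\<in>supp (add_chips x c \<mu>). of_int (add_chips x c \<mu> u) * g u)
       = (\<Sum>u\<in>supp \<mu>. of_int (\<mu> u) * g u) + of_int c * g x"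
proof -
  let ?T = "insert x (supp \<mu>)"
  have on_T: "(\<Sum>u\<in>supp \<nu>. of_int (\<nu> u) * g u) = (\<Sum>u\<in>?T. of_int (\<nu> u) * g u)"
    if "supp \<nu> \<subseteq> ?T" for \<nu>
    using that assms by (intro sum.mono_neutral_left) (auto simp: supp_def)
  from supp_add_chips have "(\<Sum>u\<in>supp (add_chips x c \<mu>). of_int (add_chips x c \<mu> u) * g u)
      = (\<Sum>u\<in>?T. of_int (\<mu> u) * g u + (if u = x then of_int c * g x else 0))"
    by (simp add: on_T) (rule sum.cong, auto simp: add_chips_def algebra_simps)
  also have "\<dots> = (\<Sum>u\<in>?T. of_int (\<mu> u) * g u) + of_int c * g x"
    using assms by (simp add: sum.distrib)
  also have "(\<Sum>u\<in>?T. of_int (\<mu> u) * g u) = (\<Sum>u\<in>supp \<mu>. of_int (\<mu> u) * g u)"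
    using on_T[of \<mu>] by (simp add: subset_insertI)
  finally show ?thesis .
qed

lemma divisor_fun_add_chips:
  assumes "finite (supp \<mu>)"
  shows "divisor_fun (add_chips x c \<mu>) z = divisor_fun \<mu> z - of_int c * ramp (z - x)"
  unfolding divisor_fun_def using sum_supp_add_chips[OF assms, of x c "\<lambda>u. ramp (z - u)"] by simp

lemma finite_supp_add_chips: "finite (supp \<mu>) \<Longrightarrow> finite (supp (add_chips x c \<mu>))"
  using finite_subset[OF supp_add_chips] by blast

lemma ramp_tent:
  assumes "l < p" "p < r"
  shows "ramp (z - l) + ramp (z - r) - ramp (z - p) - ramp (z - (l + r - p))
       = max 0 (min (z - l) (min (min (p - l) (r - p)) (r - z)))"
  using assms unfolding ramp_def by (auto simp: max_def min_def)

lemma divisor_fun_linear_between_chips: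
  assumes "\<And>u. \<mu> u \<noteq> 0 \<Longrightarrow> u \<le> l \<or> r \<le> u" and "l < p" "p \<le> r" "l \<le> z" "z \<le> r"
  shows "divisor_fun \<mu> z = divisor_fun \<mu> p + of_int (slope_left \<mu> p) * (z - p)"
proof -
  have "(\<Sum>u\<in>supp \<mu>. of_int (\<mu> u) * ((if u < p then z - p else 0) - ramp (z - u) + ramp (p - u))) = 0"
  proof (rule sum.neutral, rule ballI)
    fix u assume "u \<in> supp \<mu>"
    then have "u \<le> l \<or> r \<le> u"
      using assms(1) by (auto simp: supp_def)
    then show "of_int (\<mu> u) * ((if u < p then z - p else 0) - ramp (z - u) + ramp (p - u)) = 0"
      using assms(2-) by (auto simp: ramp_def)
  qed
  then show ?thesis
    using divisor_fun_minus_line[of \<mu> z p "\<lambda>u. u < p"] by (simp add: of_int_slope_left)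
qed

lemma divisor_fun_zero [simp]: "divisor_fun (\<lambda>_. 0) z = 0"
  by (simp add: divisor_fun_def supp_def)

locale tropical_interval =
  fixes a b :: real
begin

definition admissible :: "(real \<Rightarrow> int) \<Rightarrow> bool" where
  "admissible \<mu> \<longleftrightarrow> finite (supp \<mu>) \<and> (\<forall>u. a < u \<and> u < b \<longrightarrow> 0 \<le> \<mu> u)"

lemma divisor_fun_le_right_tangent:
  assumes "admissible \<mu>" and "a \<le> x" "x \<le> y" "y \<le> b"
  shows "divisor_fun \<mu> y \<le> divisor_fun \<mu> x + of_int (slope_right \<mu> x) * (y - x)"
proof -
  have "(\<Sum>u\<in>supp \<mu>. of_int (\<mu> u) * ((if u \<le> x then y - x else 0) - ramp (y - u) + ramp (x - u))) \<le> 0"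
  proof (rule sum_nonpos)
    fix u
    have "x < u \<Longrightarrow> u < y \<Longrightarrow> 0 \<le> \<mu> u"
      using assms unfolding admissible_def by auto
    moreover have "u \<le> x \<Longrightarrow> \<not> u < y \<Longrightarrow> x = y"
      using assms(3) by linarith
    ultimately show "of_int (\<mu> u) * ((if u \<le> x then y - x else 0) - ramp (y - u) + ramp (x - u)) \<le> 0"
      by (cases "u \<le> x"; cases "u < y") (simp_all add: ramp_def mult_nonneg_nonpos)
  qed
  then show ?thesis
    using divisor_fun_minus_line[of \<mu> y x "\<lambda>u. u \<le> x"] by (simp add: of_int_slope_right)
qed

lemma divisor_fun_le_left_tangent:
  assumes "admissible \<mu>" and "a \<le> y" "y \<le> x" "x \<le> b"
  shows "divisor_fun \<mu> y \<le> divisor_fun \<mu> x + of_int (slope_left \<mu> x) * (y - x)"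
proof -
  have "(\<Sum>u\<in>supp \<mu>. of_int (\<mu> u) * ((if u < x then y - x else 0) - ramp (y - u) + ramp (x - u))) \<le> 0"
  proof (rule sum_nonpos)
    fix u
    have "y < u \<Longrightarrow> u < x \<Longrightarrow> 0 \<le> \<mu> u"
      using assms unfolding admissible_def by auto
    then show "of_int (\<mu> u) * ((if u < x then y - x else 0) - ramp (y - u) + ramp (x - u)) \<le> 0"
      using assms(3) by (cases "u < x"; cases "y < u") (simp_all add: ramp_def mult_nonneg_nonpos)
  qed
  then show ?thesis
    using divisor_fun_minus_line[of \<mu> y x "\<lambda>u. u < x"] by (simp add: of_int_slope_left)
qed

lemma divisor_fun_le_line:
  assumes "admissible \<mu>" and "a \<le> x" "x \<le> b" "a \<le> y" "y \<le> b"
    and "x < b \<Longrightarrow> of_int (slope_right \<mu> x) \<le> v" and "a < x \<Longrightarrow> v \<le> of_int (slope_left \<mu> x)"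
  shows "divisor_fun \<mu> y \<le> divisor_fun \<mu> x + v * (y - x)"
proof (cases "x \<le> y")
  case True
  have "of_int (slope_right \<mu> x) * (y - x) \<le> v * (y - x)"
  proof (cases "x = y")
    case False
    then have "x < b"
      using True assms(5) by linarith
    then show ?thesis
      using True by (intro mult_right_mono assms(6)) auto
  qed simp
  then show ?thesis
    using divisor_fun_le_right_tangent[OF assms(1,2) True assms(5)] by linarith
next
  case False
  then have "of_int (slope_left \<mu> x) * (y - x) \<le> v * (y - x)"
    using assms(4) by (intro mult_right_mono_neg assms(7)) auto
  then show ?thesis
    using divisor_fun_le_left_tangent[OF assms(1,4) _ assms(3)] False by linarith
qed

lemma slope_left_le_slope_right:
  assumes "admissible \<mu>" and "a \<le> x" "x < y" "y \<le> b"
  shows "slope_left \<mu> y \<le> slope_right \<mu> x"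
proof -
  have "(\<Sum>u\<in>supp \<mu>. if u \<le> x then \<mu> u else 0) \<le> (\<Sum>u\<in>supp \<mu>. if u < y then \<mu> u else 0)"
    using assms by (intro sum_mono) (auto simp: admissible_def)
  then show ?thesis
    unfolding slope_left_def slope_right_def by simp
qed

lemma slope_right_le_slope_left:
  assumes "admissible \<mu>" and "a < x" "x < b"
  shows "slope_right \<mu> x \<le> slope_left \<mu> x"
  using assms slope_left_eq_slope_right_plus[of \<mu> x] by (simp add: admissible_def)

lemma not_differentiable_at_chip:
  assumes "admissible \<mu>" and "a < p" "p < b" and "0 < \<mu> p"
    and F: "\<forall>z\<in>{a..b}. F z = divisor_fun \<mu> z"
  shows "\<not> F differentiable at p"
proof
  assume "F differentiable at p"
  moreover have "\<forall>\<^sub>F y in at_right p. F y \<le> F p + of_int (slope_right \<mu> p) * (y - p)"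
    using eventually_at_right_real[OF \<open>p < b\<close>]
  proof eventually_elim
    case (elim y)
    then show ?case
      using F assms(2,3) divisor_fun_le_right_tangent[OF assms(1), of p y] by simp
  qed
  moreover have "\<forall>\<^sub>F y in at_left p. F y \<le> F p + of_int (slope_left \<mu> p) * (y - p)"
    using eventually_at_left_real[OF \<open>a < p\<close>]
  proof eventually_elim
    case (elim y)
    then show ?case
      using F assms(2,3) divisor_fun_le_left_tangent[OF assms(1), of y p] by simp
  qed
  ultimately have "real_of_int (slope_left \<mu> p) \<le> of_int (slope_right \<mu> p)"
    by (rule differentiable_imp_slopes_le)
  then show False
    using slope_left_eq_slope_right_plus[of \<mu> p] assms(1,4) by (simp add: admissible_def)
qed

lemma divisor_fun_continuous: "continuous_on S (divisor_fun \<mu>)"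
  unfolding divisor_fun_def[abs_def] ramp_def by (intro continuous_intros)

lemma canon_coeff_divisor_fun_lower:
  assumes F: "\<forall>z\<in>{a..b}. F z = divisor_fun \<mu> z" and y: "y \<in> {a..b}"
  shows "divisor_fun \<mu> y - y * of_int v \<le> canon_coeff a b F v"
proof -
  have "compact ((\<lambda>z. divisor_fun \<mu> z - z * of_int v) ` {a..b})"
    by (intro compact_continuous_image continuous_intros divisor_fun_continuous) auto
  moreover have "(\<lambda>z. divisor_fun \<mu> z - z * of_int v) ` {a..b} = (\<lambda>z. F z - z * of_int v) ` {a..b}"
    using F by (intro image_cong) auto
  ultimately have "bdd_above ((\<lambda>z. F z - z * of_int v) ` {a..b})"
    by (metis bounded_imp_bdd_above compact_imp_bounded)
  then have "F y - y * of_int v \<le> canon_coeff a b F v"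
    unfolding canon_coeff_def using y by (rule cSUP_upper2) simp
  then show ?thesis
    using F y by simp
qed

lemma canon_coeff_divisor_fun:
  assumes "admissible \<mu>" and F: "\<forall>z\<in>{a..b}. F z = divisor_fun \<mu> z" and "a \<le> x" "x \<le> b"
    and "x < b \<Longrightarrow> slope_right \<mu> x \<le> v" and "a < x \<Longrightarrow> v \<le> slope_left \<mu> x"
  shows "canon_coeff a b F v = divisor_fun \<mu> x - x * of_int v"
  unfolding canon_coeff_def
proof (rule cSup_eq_maximum)
  show "divisor_fun \<mu> x - x * of_int v \<in> (\<lambda>z. F z - z * of_int v) ` {a..b}"
    using F assms(3,4) by force
  fix t assume "t \<in> (\<lambda>z. F z - z * of_int v) ` {a..b}"
  then obtain y where "a \<le> y" "y \<le> b" "t = divisor_fun \<mu> y - y * of_int v"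
    using F by auto
  then show "t \<le> divisor_fun \<mu> x - x * of_int v"
    using divisor_fun_le_line[OF assms(1,3,4), of y "of_int v"] assms(5,6)
    by (simp add: algebra_simps)
qed

lemma divisor_fun_le_slope_right_line:
  assumes "admissible \<nu>" and "a < z" "z < b" and "a \<le> y" "y \<le> b"
  shows "divisor_fun \<nu> y \<le> divisor_fun \<nu> z + of_int (slope_right \<nu> z) * (y - z)"
  using assms slope_right_le_slope_left[OF assms(1-3)] by (intro divisor_fun_le_line) auto

lemma divisor_fun_kink_at_chip:
  assumes "admissible \<nu>" and "0 < \<nu> p" and "a \<le> l" "l \<le> p" "p \<le> r" "r \<le> b"
  shows "divisor_fun \<nu> l \<le> divisor_fun \<nu> p - of_int (w + 1) * (p - l)
       \<or> divisor_fun \<nu> r \<le> divisor_fun \<nu> p + of_int (w - 1) * (r - p)"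
proof (cases "w + 1 \<le> slope_left \<nu> p")
  case True
  then have "of_int (slope_left \<nu> p) * (l - p) \<le> of_int (w + 1) * (l - p)"
    using assms(4) by (intro mult_right_mono_neg) auto
  then show ?thesis
    using divisor_fun_le_left_tangent[OF assms(1,3,4) order_trans[OF assms(5,6)]]
    by (simp add: algebra_simps)
next
  case False
  then have "slope_right \<nu> p \<le> w - 1"
    using slope_left_eq_slope_right_plus[of \<nu> p] assms(1,2) by (simp add: admissible_def)
  then have "of_int (slope_right \<nu> p) * (r - p) \<le> of_int (w - 1) * (r - p)"
    using assms(5) by (intro mult_right_mono) auto
  then show ?thesis
    using divisor_fun_le_right_tangent[OF assms(1) order_trans[OF assms(3,4)] assms(5,6)]
    by (simp add: algebra_simps)
qed

section \<open>Moving chips and the operator \<open>G\<^sub>p\<close>\<close>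

text \<open>The boundary points act as an unlimited supply of chips: the nearest chips around \<open>p\<close>
  default to \<open>a\<close> and \<open>b\<close>.\<close>
definition left_chip :: "(real \<Rightarrow> int) \<Rightarrow> real \<Rightarrow> real" where
  "left_chip \<mu> p = Max (insert a {u. a < u \<and> u < p \<and> 0 < \<mu> u})"

definition right_chip :: "(real \<Rightarrow> int) \<Rightarrow> real \<Rightarrow> real" where
  "right_chip \<mu> p = Min (insert b {u. p < u \<and> u < b \<and> 0 < \<mu> u})"

definition gap_radius :: "(real \<Rightarrow> int) \<Rightarrow> real \<Rightarrow> real" where
  "gap_radius \<mu> p = min (p - left_chip \<mu> p) (right_chip \<mu> p - p)"

definition move :: "(real \<Rightarrow> int) \<Rightarrow> real \<Rightarrow> (real \<Rightarrow> int)" where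
  "move \<mu> p = (if \<mu> p \<noteq> 0 then \<mu> else
     add_chips (right_chip \<mu> p) (-1) (add_chips (left_chip \<mu> p) (-1)
       (add_chips (left_chip \<mu> p + right_chip \<mu> p - p) 1 (add_chips p 1 \<mu>))))"

lemma move_apply:
  "move \<mu> p u = (if \<mu> p \<noteq> 0 then \<mu> u else
     \<mu> u + of_bool (u = p) + of_bool (u = left_chip \<mu> p + right_chip \<mu> p - p)
       - of_bool (u = left_chip \<mu> p) - of_bool (u = right_chip \<mu> p))"
  by (simp add: move_def add_chips_def)

end

locale vacant_point = tropical_interval +
  fixes \<mu> :: "real \<Rightarrow> int" and p :: real
  assumes admissible: "admissible \<mu>" and p_inside: "a < p" "p < b" and vacant: "\<mu> p = 0"
begin

abbreviation "l \<equiv> left_chip \<mu> p"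

abbreviation "r \<equiv> right_chip \<mu> p"

abbreviation "w \<equiv> slope_left \<mu> p"

abbreviation "d \<equiv> gap_radius \<mu> p"

lemma finite_supp: "finite (supp \<mu>)"
  using admissible by (simp add: admissible_def)

lemma
  shows left_chip_ge: "a \<le> l" and left_chip_less: "l < p" and left_chip_pos: "a < l \<Longrightarrow> 0 < \<mu> l"
    and right_chip_le: "r \<le> b" and right_chip_greater: "p < r" and right_chip_pos: "r < b \<Longrightarrow> 0 < \<mu> r"
    and no_chip_in_gap: "\<mu> u \<noteq> 0 \<Longrightarrow> u \<le> l \<or> r \<le> u"
proof -
  let ?L = "{u. a < u \<and> u < p \<and> 0 < \<mu> u}" and ?R = "{u. p < u \<and> u < b \<and> 0 < \<mu> u}"
  have "finite ?L" "finite ?R"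
    by (rule finite_subset[OF _ finite_supp], force simp: supp_def)+
  then have l: "l \<in> insert a ?L" "\<And>u. u \<in> insert a ?L \<Longrightarrow> u \<le> l"
    and r: "r \<in> insert b ?R" "\<And>u. u \<in> insert b ?R \<Longrightarrow> r \<le> u"
    unfolding left_chip_def right_chip_def by (auto intro!: Max_in Max_ge Min_in Min_le simp del: insert_iff)
  show "a \<le> l" "r \<le> b"
    using l(2) r(2) by blast+
  show "l < p" "a < l \<Longrightarrow> 0 < \<mu> l" "p < r" "r < b \<Longrightarrow> 0 < \<mu> r"
    using l(1) r(1) p_inside by auto
  show "\<mu> u \<noteq> 0 \<Longrightarrow> u \<le> l \<or> r \<le> u"
  proof (rule ccontr)
    assume "\<mu> u \<noteq> 0" "\<not> (u \<le> l \<or> r \<le> u)"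
    moreover from this have "a < u" "u < b"
      using l(2)[of a] r(2)[of b] by auto
    ultimately have "0 < \<mu> u"
      using admissible by (force simp: admissible_def)
    then show False
      using l(2)[of u] r(2)[of u] vacant \<open>a < u\<close> \<open>u < b\<close> \<open>\<not> (u \<le> l \<or> r \<le> u)\<close>
      by (cases u p rule: linorder_cases) auto
  qed
qed

lemma divisor_fun_on_gap:
  assumes "l \<le> z" "z \<le> r"
  shows "divisor_fun \<mu> z = divisor_fun \<mu> p + of_int w * (z - p)"
  by (rule divisor_fun_linear_between_chips[OF no_chip_in_gap left_chip_less
        less_imp_le[OF right_chip_greater] assms])

lemma slope_right_vacant: "slope_right \<mu> p = w"
  using slope_left_eq_slope_right_plus[OF finite_supp, of p] vacant by simp

lemma slope_right_left_chip: "slope_right \<mu> l = w"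
proof -
  have "(if u \<le> l then \<mu> u else 0) = (if u < p then \<mu> u else 0)" for u
  proof (cases "\<mu> u = 0")
    case False
    then have "u \<le> l \<or> r \<le> u"
      by (rule no_chip_in_gap)
    then show ?thesis
      using left_chip_less right_chip_greater by auto
  qed simp
  then show ?thesis
    unfolding slope_left_def slope_right_def by simp
qed

lemma slope_left_right_chip: "slope_left \<mu> r = w"
proof -
  have "(if u < r then \<mu> u else 0) = (if u < p then \<mu> u else 0)" for u
  proof (cases "\<mu> u = 0")
    case False
    then have "u \<le> l \<or> r \<le> u"
      by (rule no_chip_in_gap)
    then show ?thesis
      using left_chip_less right_chip_greater by auto
  qed simp
  then show ?thesis
    unfolding slope_left_def by simp
qed

lemma slope_left_left_chip: "a < l \<Longrightarrow> w + 1 \<le> slope_left \<mu> l"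
  using slope_left_eq_slope_right_plus[OF finite_supp, of l] slope_right_left_chip left_chip_pos
  by simp

lemma slope_right_right_chip: "r < b \<Longrightarrow> slope_right \<mu> r \<le> w - 1"
  using slope_left_eq_slope_right_plus[OF finite_supp, of r] slope_left_right_chip right_chip_pos
  by simp

definition tent :: "real \<Rightarrow> real" where
  "tent z = max 0 (min (z - l) (min d (r - z)))"

lemma gap_radius_pos: "0 < d"
  using left_chip_less right_chip_greater by (simp add: gap_radius_def)

lemma tent_vacant: "tent p = d"
  using left_chip_less right_chip_greater by (auto simp: tent_def gap_radius_def)

lemma tent_bounds: "0 \<le> tent z" "tent z \<le> d"
  using left_chip_less right_chip_greater by (auto simp: tent_def gap_radius_def)

lemma divisor_fun_move: "divisor_fun (move \<mu> p) z = divisor_fun \<mu> z + tent z"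
proof -
  have "divisor_fun (move \<mu> p) z
      = divisor_fun \<mu> z + (ramp (z - l) + ramp (z - r) - ramp (z - p) - ramp (z - (l + r - p)))"
    using vacant finite_supp
    by (simp add: move_def divisor_fun_add_chips finite_supp_add_chips)
  then show ?thesis
    using ramp_tent[OF left_chip_less right_chip_greater] by (simp add: tent_def gap_radius_def)
qed

lemma admissible_move_vacant: "admissible (move \<mu> p)"
proof -
  have "finite (supp (move \<mu> p))"
    using finite_supp by (simp add: move_def finite_supp_add_chips)
  moreover have "0 \<le> move \<mu> p u" if "a < u" "u < b" for u
  proof -
    have "0 \<le> \<mu> u"
      using admissible that by (simp add: admissible_def)
    moreover have "l \<noteq> r"
      using left_chip_less right_chip_greater by simp
    ultimately have "of_bool (u = l) + of_bool (u = r) \<le> \<mu> u"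
      using that left_chip_pos right_chip_pos by (cases "u = l"; cases "u = r") auto
    moreover have "move \<mu> p u
        = \<mu> u + of_bool (u = p) + of_bool (u = l + r - p) - of_bool (u = l) - of_bool (u = r)"
      by (subst move_apply) (simp add: vacant)
    moreover have "0 \<le> (of_bool P :: int)" for P
      by simp
    ultimately show ?thesis
      by (smt (verit))
  qed
  ultimately show ?thesis
    by (simp add: admissible_def)
qed

text \<open>A chip at \<open>p\<close> on an upper bound \<open>\<nu>\<close> keeps the tent raised at \<open>p\<close> below \<open>\<nu>\<close>:
  a supergradient of \<open>\<nu>\<close> at a point of the gap differs from \<open>w\<close>, or equals it and then \<open>\<nu>\<close>
  bends at \<open>p\<close>; either way \<open>\<nu>\<close> would fall below \<open>\<mu>\<close> at \<open>l\<close> or at \<open>r\<close>.\<close>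
lemma divisor_fun_move_le:
  assumes \<nu>: "admissible \<nu>" "0 < \<nu> p"
    and le: "\<forall>y\<in>{a..b}. divisor_fun \<mu> y \<le> divisor_fun \<nu> y" and z: "z \<in> {a..b}"
  shows "divisor_fun (move \<mu> p) z \<le> divisor_fun \<nu> z"
proof (rule ccontr)
  assume "\<not> ?thesis"
  then have below: "divisor_fun \<nu> z < divisor_fun \<mu> z + tent z"
    by (simp add: divisor_fun_move)
  then have "0 < tent z"
    using le z by force
  then have gap: "l < z" "z < r" "tent z \<le> z - l" "tent z \<le> r - z"
    by (auto simp: tent_def)
  have radius: "tent z \<le> p - l" "tent z \<le> r - p"
    using tent_bounds(2)[of z] by (auto simp: gap_radius_def)
  have lin: "divisor_fun \<mu> z = divisor_fun \<mu> p + of_int w * (z - p)"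
    "divisor_fun \<mu> l = divisor_fun \<mu> p + of_int w * (l - p)"
    "divisor_fun \<mu> r = divisor_fun \<mu> p + of_int w * (r - p)"
    using gap left_chip_less right_chip_greater by (auto intro!: divisor_fun_on_gap)
  have ends: "divisor_fun \<mu> l \<le> divisor_fun \<nu> l" "divisor_fun \<mu> r \<le> divisor_fun \<nu> r"
    using le left_chip_ge left_chip_less right_chip_le right_chip_greater p_inside by auto
  define s where "s = slope_right \<nu> z"
  have line: "divisor_fun \<nu> y \<le> divisor_fun \<nu> z + of_int s * (y - z)" if "a \<le> y" "y \<le> b" for y
    unfolding s_def using gap left_chip_ge right_chip_le that
    by (intro divisor_fun_le_slope_right_line[OF \<nu>(1)]) auto
  consider "w + 1 \<le> s" | "s \<le> w - 1" | "s = w"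
    by linarith
  then show False
  proof cases
    case 1
    then have "of_int (w + 1) * (z - l) \<le> of_int s * (z - l)"
      using gap by (intro mult_right_mono) auto
    then show False
      using line[of l] left_chip_ge left_chip_less p_inside below gap lin ends
      by (simp add: algebra_simps)
  next
    case 2
    then have "of_int s * (r - z) \<le> of_int (w - 1) * (r - z)"
      using gap by (intro mult_right_mono) auto
    then show False
      using line[of r] right_chip_le right_chip_greater p_inside below gap lin ends
      by (simp add: algebra_simps)
  next
    case 3
    then have "divisor_fun \<nu> p \<le> divisor_fun \<nu> z + of_int w * (p - z)"
      using line p_inside by simp
    then show False
      using divisor_fun_kink_at_chip[OF \<nu> left_chip_ge _ _ right_chip_le, of w]
        left_chip_less right_chip_greater below lin ends radius
      by (auto simp: algebra_simps)
  qed
qed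

end

locale vacant_series = vacant_point +
  fixes F :: "real \<Rightarrow> real"
  assumes F_eq: "\<forall>z\<in>{a..b}. F z = divisor_fun \<mu> z"
begin

abbreviation "A \<equiv> canon_coeff a b F"

lemma canon_coeff_lower: "z \<in> {a..b} \<Longrightarrow> divisor_fun \<mu> z - z * of_int v \<le> A v"
  by (rule canon_coeff_divisor_fun_lower[OF F_eq])

lemma canon_coeff_slope: "A w = divisor_fun \<mu> p - p * of_int w"
  using p_inside slope_right_vacant by (intro canon_coeff_divisor_fun[OF admissible F_eq]) auto

lemma canon_coeff_slope_plus: "A (w + 1) = divisor_fun \<mu> l - l * of_int (w + 1)"
  using left_chip_ge left_chip_less p_inside slope_right_left_chip slope_left_left_chip
  by (intro canon_coeff_divisor_fun[OF admissible F_eq]) auto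

lemma canon_coeff_slope_minus: "A (w - 1) = divisor_fun \<mu> r - r * of_int (w - 1)"
  using right_chip_le right_chip_greater p_inside slope_left_right_chip slope_right_right_chip
  by (intro canon_coeff_divisor_fun[OF admissible F_eq]) auto

lemma affine_near_vacant:
  assumes "\<bar>z - p\<bar> < d"
  shows "F z = A w + z * of_int w"
proof -
  have "l < z" "z < r"
    using assms by (auto simp: gap_radius_def)
  then have "F z = divisor_fun \<mu> z"
    using F_eq left_chip_ge right_chip_le by auto
  then show ?thesis
    using divisor_fun_on_gap[of z] \<open>l < z\<close> \<open>z < r\<close> canon_coeff_slope by (simp add: algebra_simps)
qed

lemma differentiable_at_vacant: "F differentiable at p"
  using has_real_derivative_locally_affine[OF gap_radius_pos affine_near_vacant]
  by (rule differentiableI[OF has_field_derivative_imp_has_derivative])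

lemma local_slope_vacant: "local_slope a b F p = w"
  unfolding local_slope_def
proof (rule the_equality)
  show "\<exists>e>0. \<forall>z. \<bar>z - p\<bar> < e \<longrightarrow> F z = A w + z * of_int w"
    using gap_radius_pos affine_near_vacant by blast
next
  fix v assume "\<exists>e>0. \<forall>z. \<bar>z - p\<bar> < e \<longrightarrow> F z = A v + z * of_int v"
  then have "(F has_real_derivative of_int v) (at p)"
    by (metis has_real_derivative_locally_affine)
  then show "v = w"
    using DERIV_unique has_real_derivative_locally_affine[OF gap_radius_pos affine_near_vacant]
    by fastforce
qed

text \<open>Away from \<open>w\<close> the canonical coefficients see the kinks at \<open>l\<close> and \<open>r\<close>, which is
  what lifts the infimum by the tent.\<close>
lemma canon_coeff_other_slope:
  assumes "v \<noteq> w" and z: "z \<in> {a..b}"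
  shows "divisor_fun \<mu> z + tent z \<le> A v + z * of_int v"
proof (cases "0 < tent z")
  case False
  then show ?thesis
    using canon_coeff_lower[OF z, of v] by linarith
next
  case True
  then have gap: "l < z" "z < r" "tent z \<le> z - l" "tent z \<le> r - z"
    by (auto simp: tent_def)
  then have z_lin: "divisor_fun \<mu> z = divisor_fun \<mu> p + of_int w * (z - p)"
    by (intro divisor_fun_on_gap) auto
  show ?thesis
  proof (cases "w < v")
    case True
    then have "of_int (w + 1) * (z - l) \<le> of_int v * (z - l)"
      using gap by (intro mult_right_mono) auto
    moreover have "divisor_fun \<mu> l - l * of_int v \<le> A v"
      using left_chip_ge left_chip_less p_inside by (intro canon_coeff_lower) auto
    ultimately show ?thesis
      using z_lin divisor_fun_on_gap[of l] gap right_chip_greater left_chip_less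
      by (simp add: algebra_simps)
  next
    case False
    then have "of_int v * (r - z) \<le> of_int (w - 1) * (r - z)"
      using gap assms(1) by (intro mult_right_mono) auto
    moreover have "divisor_fun \<mu> r - r * of_int v \<le> A v"
      using right_chip_le right_chip_greater p_inside by (intro canon_coeff_lower) auto
    ultimately show ?thesis
      using z_lin divisor_fun_on_gap[of r] gap right_chip_greater left_chip_less
      by (simp add: algebra_simps)
  qed
qed

lemma INF_other_canon_coeffs: "(INF u\<in>UNIV - {w}. A u + p * of_int u) = divisor_fun \<mu> p + d"
proof (rule cInf_eq_minimum)
  have shifted: "A (w + 1) + p * of_int (w + 1) = divisor_fun \<mu> p + (p - l)"
    "A (w - 1) + p * of_int (w - 1) = divisor_fun \<mu> p + (r - p)"
    using canon_coeff_slope_plus canon_coeff_slope_minus divisor_fun_on_gap[of l] divisor_fun_on_gap[of r]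
      left_chip_less right_chip_greater by (simp_all add: algebra_simps)
  show "divisor_fun \<mu> p + d \<in> (\<lambda>u. A u + p * of_int u) ` (UNIV - {w})"
  proof (cases "p - l \<le> r - p")
    case True
    then have "divisor_fun \<mu> p + d = A (w + 1) + p * of_int (w + 1)"
      using shifted by (simp add: gap_radius_def)
    then show ?thesis
      by (intro image_eqI[of _ _ "w + 1"]) auto
  next
    case False
    then have "divisor_fun \<mu> p + d = A (w - 1) + p * of_int (w - 1)"
      using shifted by (simp add: gap_radius_def)
    then show ?thesis
      by (intro image_eqI[of _ _ "w - 1"]) auto
  qed
next
  fix t assume "t \<in> (\<lambda>u. A u + p * of_int u) ` (UNIV - {w})"
  then show "divisor_fun \<mu> p + d \<le> t"
    using canon_coeff_other_slope[of _ p] tent_vacant p_inside by auto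
qed

definition relaxed_coeff :: "int \<Rightarrow> real" where
  "relaxed_coeff v = (if v = w then (INF u\<in>UNIV - {w}. A u + p * of_int u) - p * of_int w else A v)"

lemma G_op_vacant_eq: "G_op a b p F z = (INF v. relaxed_coeff v + z * of_int v)"
  using differentiable_at_vacant
  unfolding G_op_def Let_def local_slope_vacant relaxed_coeff_def by simp

lemma relaxed_coeff_slope: "relaxed_coeff w = divisor_fun \<mu> p + d - p * of_int w"
  by (simp add: relaxed_coeff_def INF_other_canon_coeffs)

lemma relaxed_coeff_lower:
  assumes "z \<in> {a..b}"
  shows "divisor_fun \<mu> z + tent z \<le> relaxed_coeff v + z * of_int v"
proof (cases "v = w")
  case True
  have "divisor_fun \<mu> z - z * of_int w \<le> divisor_fun \<mu> p - p * of_int w"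
    using canon_coeff_lower[OF assms, of w] canon_coeff_slope by simp
  then show ?thesis
    using True tent_bounds(2)[of z] by (simp add: relaxed_coeff_slope)
next
  case False
  then show ?thesis
    using canon_coeff_other_slope[OF False assms] by (simp add: relaxed_coeff_def)
qed

lemma relaxed_coeff_attained_on_gap:
  assumes "l \<le> z" "z \<le> r"
  shows "\<exists>v. relaxed_coeff v + z * of_int v = divisor_fun \<mu> z + tent z"
proof -
  have z_lin: "divisor_fun \<mu> z = divisor_fun \<mu> p + of_int w * (z - p)"
    using assms by (rule divisor_fun_on_gap)
  have l_lin: "divisor_fun \<mu> l = divisor_fun \<mu> p + of_int w * (l - p)"
    and r_lin: "divisor_fun \<mu> r = divisor_fun \<mu> p + of_int w * (r - p)"
    using left_chip_less right_chip_greater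
    by (auto intro!: divisor_fun_on_gap)
  have "tent z = min (z - l) (min d (r - z))"
    using assms gap_radius_pos by (simp add: tent_def)
  then consider "tent z = z - l" | "tent z = d" | "tent z = r - z"
    by linarith
  then show ?thesis
  proof cases
    case 1
    then have "relaxed_coeff (w + 1) + z * of_int (w + 1) = divisor_fun \<mu> z + tent z"
      using canon_coeff_slope_plus l_lin z_lin by (simp add: relaxed_coeff_def algebra_simps)
    then show ?thesis ..
  next
    case 2
    then have "relaxed_coeff w + z * of_int w = divisor_fun \<mu> z + tent z"
      using z_lin by (simp add: relaxed_coeff_slope algebra_simps)
    then show ?thesis ..
  next
    case 3
    then have "relaxed_coeff (w - 1) + z * of_int (w - 1) = divisor_fun \<mu> z + tent z"
      using canon_coeff_slope_minus r_lin z_lin by (simp add: relaxed_coeff_def algebra_simps)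
    then show ?thesis ..
  qed
qed

lemma relaxed_coeff_attained_off_gap:
  assumes z: "a \<le> z" "z \<le> b" and off: "z < l \<or> r < z"
  shows "\<exists>v. relaxed_coeff v + z * of_int v = divisor_fun \<mu> z + tent z"
proof -
  have "tent z = 0"
    using off by (auto simp: tent_def)
  obtain v where "v \<noteq> w" "A v = divisor_fun \<mu> z - z * of_int v"
  proof (cases "z < l")
    case True
    let ?v = "slope_right \<mu> z"
    have "w + 1 \<le> slope_left \<mu> l"
      using slope_left_left_chip z True by auto
    also have "slope_left \<mu> l \<le> ?v"
      using slope_left_le_slope_right[OF admissible z(1) True] left_chip_less p_inside by auto
    finally have "?v \<noteq> w"
      by simp
    moreover have "A ?v = divisor_fun \<mu> z - z * of_int ?v"
      using z True left_chip_less p_inside slope_right_le_slope_left[OF admissible, of z]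
      by (intro canon_coeff_divisor_fun[OF admissible F_eq]) auto
    ultimately show ?thesis
      by (rule that)
  next
    case False
    then have "r < z"
      using off by simp
    let ?v = "slope_left \<mu> z"
    have "?v \<le> slope_right \<mu> r"
      using slope_left_le_slope_right[OF admissible _ \<open>r < z\<close> z(2)] right_chip_greater p_inside
      by auto
    also have "\<dots> \<le> w - 1"
      using slope_right_right_chip \<open>r < z\<close> z by auto
    finally have "?v \<noteq> w"
      by simp
    moreover have "A ?v = divisor_fun \<mu> z - z * of_int ?v"
      using z \<open>r < z\<close> right_chip_greater p_inside slope_right_le_slope_left[OF admissible, of z]
      by (intro canon_coeff_divisor_fun[OF admissible F_eq]) auto
    ultimately show ?thesis
      by (rule that)
  qed
  then show ?thesis
    using \<open>tent z = 0\<close> by (intro exI[of _ v]) (simp add: relaxed_coeff_def)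
qed

lemma G_op_vacant:
  assumes z: "z \<in> {a..b}"
  shows "G_op a b p F z = divisor_fun (move \<mu> p) z"
proof -
  have "\<exists>v. relaxed_coeff v + z * of_int v = divisor_fun \<mu> z + tent z"
  proof (cases "l \<le> z \<and> z \<le> r")
    case True
    then show ?thesis
      by (intro relaxed_coeff_attained_on_gap) simp_all
  next
    case False
    then have "z < l \<or> r < z"
      by linarith
    then show ?thesis
      using z by (intro relaxed_coeff_attained_off_gap) simp_all
  qed
  then obtain v where v: "relaxed_coeff v + z * of_int v = divisor_fun \<mu> z + tent z" ..
  have "(INF v. relaxed_coeff v + z * of_int v) = divisor_fun \<mu> z + tent z"
  proof (rule cInf_eq_minimum)
    show "divisor_fun \<mu> z + tent z \<in> range (\<lambda>v. relaxed_coeff v + z * of_int v)"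
      using v by (rule range_eqI[OF sym])
  next
    fix t assume "t \<in> range (\<lambda>v. relaxed_coeff v + z * of_int v)"
    then show "divisor_fun \<mu> z + tent z \<le> t"
      using relaxed_coeff_lower[OF z] by auto
  qed
  then show ?thesis
    by (simp only: G_op_vacant_eq divisor_fun_move)
qed

end

context tropical_interval
begin

lemma G_op_divisor_fun:
  assumes "admissible \<mu>" "a < p" "p < b" and F: "\<forall>z\<in>{a..b}. F z = divisor_fun \<mu> z"
    and z: "z \<in> {a..b}"
  shows "G_op a b p F z = divisor_fun (move \<mu> p) z"
proof (cases "\<mu> p = 0")
  case True
  then interpret vacant_series a b \<mu> p F
    using assms by unfold_locales simp_all
  show ?thesis
    using G_op_vacant[OF z] .
next
  case False
  then have "0 < \<mu> p"
    using assms(1-3) by (auto simp: admissible_def less_le)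
  then have "G_op a b p F = F"
    using not_differentiable_at_chip[OF assms(1-3) _ F] by (simp add: G_op_def)
  moreover have "move \<mu> p = \<mu>"
    using False by (simp add: move_def)
  ultimately show ?thesis
    using F z by simp
qed

lemma admissible_move:
  assumes "admissible \<mu>" "a < p" "p < b"
  shows "admissible (move \<mu> p)"
proof (cases "\<mu> p = 0")
  case True
  then interpret vacant_point a b \<mu> p
    using assms by unfold_locales simp_all
  show ?thesis
    by (rule admissible_move_vacant)
qed (use assms in \<open>simp add: move_def\<close>)

lemma divisor_fun_le_move:
  assumes "admissible \<mu>" "a < p" "p < b"
  shows "divisor_fun \<mu> z \<le> divisor_fun (move \<mu> p) z"
proof (cases "\<mu> p = 0")
  case True
  then interpret vacant_point a b \<mu> p
    using assms by unfold_locales simp_all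
  show ?thesis
    using divisor_fun_move tent_bounds(1) by simp
qed (simp add: move_def)

lemma divisor_fun_move_le_bound:
  assumes "admissible \<mu>" "a < p" "p < b" "admissible \<nu>" "0 < \<nu> p"
    and "\<forall>y\<in>{a..b}. divisor_fun \<mu> y \<le> divisor_fun \<nu> y"
  shows "\<forall>z\<in>{a..b}. divisor_fun (move \<mu> p) z \<le> divisor_fun \<nu> z"
proof (cases "\<mu> p = 0")
  case True
  then interpret vacant_point a b \<mu> p
    using assms by unfold_locales simp_all
  show ?thesis
    using divisor_fun_move_le[OF assms(4-6)] by blast
qed (use assms in \<open>simp add: move_def\<close>)

end

section \<open>Stabilization of the relaxation\<close>

primrec chip_config :: "real \<Rightarrow> real \<Rightarrow> (nat \<Rightarrow> real) \<Rightarrow> nat \<Rightarrow> (real \<Rightarrow> int)" where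
  "chip_config a b q 0 = (\<lambda>_. 0)"
| "chip_config a b q (Suc m) = tropical_interval.move a b (chip_config a b q m) (q m)"

locale relaxation = tropical_interval +
  fixes q :: "nat \<Rightarrow> real" and P :: "real set"
  assumes finite_P: "finite P" and P_inside: "\<And>x. x \<in> P \<Longrightarrow> a < x \<and> x < b"
    and q_in_P: "\<And>m. q m \<in> P"
begin

abbreviation "conf m \<equiv> chip_config a b q m"

lemma q_inside: "a < q m" "q m < b"
  using P_inside[OF q_in_P[of m]] by auto

lemma admissible_conf: "admissible (conf m)"
proof (induction m)
  case 0
  then show ?case
    by (simp add: admissible_def supp_def)
next
  case (Suc m)
  then show ?case
    using admissible_move q_inside by simp
qed

definition fires :: "nat \<Rightarrow> bool" where
  "fires m \<longleftrightarrow> conf m (q m) = 0"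

lemma move_conf_if_not_fires: "\<not> fires m \<Longrightarrow> move (conf m) (q m) = conf m"
  by (simp add: fires_def move_def)

lemma relax_eq_divisor_fun_conf:
  assumes "\<And>m. q m = p (k (Suc m))" and "z \<in> {a..b}"
  shows "relax a b p k m z = divisor_fun (conf m) z"
  using assms(2)
proof (induction m arbitrary: z)
  case (Suc m)
  have "relax a b p k (Suc m) = G_op a b (q m) (relax a b p k m)"
    by (simp add: assms(1))
  moreover have "\<forall>z\<in>{a..b}. relax a b p k m z = divisor_fun (conf m) z"
    using Suc.IH by blast
  ultimately show ?case
    using G_op_divisor_fun[OF admissible_conf q_inside] Suc.prems by simp
qed simp

definition bound_divisor :: "real \<Rightarrow> int" where
  "bound_divisor u = (if u \<in> P then 1 else if u = a then - int (card P) else 0)"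

lemma supp_bound_divisor: "supp bound_divisor \<subseteq> insert a P"
  by (auto simp: supp_def bound_divisor_def split: if_splits)

lemma admissible_bound_divisor: "admissible bound_divisor"
  using finite_subset[OF supp_bound_divisor] finite_P
  by (auto simp: admissible_def bound_divisor_def)

lemma divisor_fun_bound_divisor:
  "divisor_fun bound_divisor z = of_nat (card P) * ramp (z - a) - (\<Sum>x\<in>P. ramp (z - x))"
proof -
  have "a \<notin> P"
    using P_inside by force
  have "divisor_fun bound_divisor z = - (\<Sum>u\<in>insert a P. of_int (bound_divisor u) * ramp (z - u))"
    unfolding divisor_fun_def using supp_bound_divisor finite_P
    by (intro arg_cong[where f = uminus] sum.mono_neutral_left) (auto simp: supp_def)
  also have "\<dots> = of_nat (card P) * ramp (z - a) - (\<Sum>x\<in>P. ramp (z - x))"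
    using \<open>a \<notin> P\<close> finite_P by (simp add: bound_divisor_def)
  finally show ?thesis .
qed

lemma divisor_fun_bound_divisor_bounds:
  assumes "a \<le> z" "z \<le> b"
  shows "0 \<le> divisor_fun bound_divisor z" "divisor_fun bound_divisor z \<le> of_nat (card P) * (b - a)"
proof -
  have "(\<Sum>x\<in>P. ramp (z - x)) \<le> of_nat (card P) * (z - a)"
    using assms P_inside by (intro sum_bounded_above) (force simp: ramp_def)
  moreover have "0 \<le> (\<Sum>x\<in>P. ramp (z - x))"
    by (intro sum_nonneg) (simp add: ramp_def)
  moreover have "of_nat (card P) * (z - a) \<le> of_nat (card P) * (b - a)"
    using assms by (intro mult_left_mono) auto
  ultimately show "0 \<le> divisor_fun bound_divisor z" "divisor_fun bound_divisor z \<le> of_nat (card P) * (b - a)"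
    using assms by (simp_all add: divisor_fun_bound_divisor ramp_def)
qed

lemma divisor_fun_conf_le_bound: "\<forall>z\<in>{a..b}. divisor_fun (conf m) z \<le> divisor_fun bound_divisor z"
proof (induction m)
  case 0
  then show ?case
    using divisor_fun_bound_divisor_bounds(1) by simp
next
  case (Suc m)
  have "0 < bound_divisor (q m)"
    using q_in_P[of m] by (simp add: bound_divisor_def)
  then show ?case
    using divisor_fun_move_le_bound[OF admissible_conf q_inside admissible_bound_divisor _ Suc.IH]
    by simp
qed

definition potential :: "nat \<Rightarrow> real" where
  "potential m = (\<Sum>x\<in>P. divisor_fun (conf m) x)"

lemma potential_le: "potential m \<le> of_nat (card P) * (of_nat (card P) * (b - a))"
  unfolding potential_def
proof (rule sum_bounded_above)
  fix x assume "x \<in> P"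
  then have "a \<le> x" "x \<le> b"
    using P_inside by force+
  then show "divisor_fun (conf m) x \<le> of_nat (card P) * (b - a)"
    using divisor_fun_conf_le_bound[of m] divisor_fun_bound_divisor_bounds(2)[of x] by force
qed

lemma potential_mono: "potential m \<le> potential (Suc m)"
  unfolding potential_def by (auto intro: sum_mono divisor_fun_le_move admissible_conf q_inside)

lemma potential_Suc_if_fires:
  assumes "fires m"
  shows "potential m + gap_radius (conf m) (q m) \<le> potential (Suc m)"
proof -
  interpret vacant_point a b "conf m" "q m"
    using assms admissible_conf q_inside by unfold_locales (simp_all add: fires_def)
  have "potential (Suc m) = potential m + (\<Sum>x\<in>P. tent x)"
    by (simp add: potential_def divisor_fun_move sum.distrib)
  moreover have "tent (q m) \<le> (\<Sum>x\<in>P. tent x)"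
    using finite_P q_in_P tent_bounds(1) by (intro member_le_sum) auto
  ultimately show ?thesis
    using tent_vacant by simp
qed

definition wide_firing :: "real \<Rightarrow> nat \<Rightarrow> bool" where
  "wide_firing \<epsilon> m \<longleftrightarrow> fires m \<and> \<epsilon> \<le> gap_radius (conf m) (q m)"

lemma card_wide_firings_le_potential:
  assumes "0 \<le> \<epsilon>"
  shows "\<epsilon> * of_nat (card {j. wide_firing \<epsilon> j \<and> j < m}) \<le> potential m"
proof (induction m)
  case 0
  then show ?case
    by (simp add: potential_def)
next
  case (Suc m)
  show ?case
  proof (cases "wide_firing \<epsilon> m")
    case True
    then have "{j. wide_firing \<epsilon> j \<and> j < Suc m} = insert m {j. wide_firing \<epsilon> j \<and> j < m}"
      by auto
    then have "\<epsilon> * of_nat (card {j. wide_firing \<epsilon> j \<and> j < Suc m})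
        = \<epsilon> * of_nat (card {j. wide_firing \<epsilon> j \<and> j < m}) + \<epsilon>"
      by (simp add: algebra_simps)
    also have "\<dots> \<le> potential (Suc m)"
      using Suc.IH potential_Suc_if_fires[of m] True by (simp add: wide_firing_def)
    finally show ?thesis .
  next
    case False
    then have "{j. wide_firing \<epsilon> j \<and> j < Suc m} = {j. wide_firing \<epsilon> j \<and> j < m}"
      using less_Suc_eq by auto
    then show ?thesis
      using Suc.IH potential_mono[of m] by simp
  qed
qed

lemma finite_wide_firings:
  assumes "0 < \<epsilon>"
  shows "finite {m. wide_firing \<epsilon> m}"
proof (rule finite_if_bounded_card_below)
  let ?C = "of_nat (card P) * (of_nat (card P) * (b - a)) / \<epsilon>"
  fix m
  have "\<epsilon> * of_nat (card {j. wide_firing \<epsilon> j \<and> j < m}) \<le> \<epsilon> * ?C"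
    using card_wide_firings_le_potential[of \<epsilon> m] potential_le[of m] assms by simp
  then have "of_nat (card {j. wide_firing \<epsilon> j \<and> j < m}) \<le> ?C"
    using assms by (simp add: pos_le_divide_eq mult.commute)
  then show "card {j \<in> {m. wide_firing \<epsilon> m}. j < m} \<le> nat \<lceil>?C\<rceil>"
    by (simp add: le_nat_iff le_ceiling_iff)
qed

definition marked :: "real set" where
  "marked = insert a (insert b P)"

definition free :: "real \<Rightarrow> bool" where
  "free u \<longleftrightarrow> a < u \<and> u < b \<and> u \<notin> P"

definition free_chips :: "(real \<Rightarrow> int) \<Rightarrow> int" where
  "free_chips \<mu> = (\<Sum>u\<in>supp \<mu>. \<mu> u * of_bool (free u))"

lemma finite_marked: "finite marked"
  using finite_P by (simp add: marked_def)

lemma free_iff_not_marked: "a \<le> u \<Longrightarrow> u \<le> b \<Longrightarrow> free u \<longleftrightarrow> u \<notin> marked"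
  by (auto simp: free_def marked_def)

lemma free_chips_nonneg: "admissible \<mu> \<Longrightarrow> 0 \<le> free_chips \<mu>"
  unfolding free_chips_def admissible_def free_def by (intro sum_nonneg) auto

lemma free_chips_add_chips:
  "finite (supp \<mu>) \<Longrightarrow> free_chips (add_chips x c \<mu>) = free_chips \<mu> + c * of_bool (free x)"
  using sum_supp_add_chips[of \<mu> x c "\<lambda>u. of_bool (free u) :: int"] by (simp add: free_chips_def)

lemma free_chips_move:
  assumes "admissible \<mu>" "p \<in> P" "\<mu> p = 0"
  shows "free_chips (move \<mu> p) = free_chips \<mu> + of_bool (free (left_chip \<mu> p + right_chip \<mu> p - p))
           - of_bool (free (left_chip \<mu> p)) - of_bool (free (right_chip \<mu> p))"
proof -
  have "finite (supp \<mu>)" "\<not> free p"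
    using assms by (simp_all add: admissible_def free_def)
  then show ?thesis
    using assms(3) by (simp add: move_def free_chips_add_chips finite_supp_add_chips)
qed

end

locale separated_relaxation = relaxation +
  fixes \<delta> :: real
  assumes delta_pos: "0 < \<delta>"
    and separated: "\<forall>x\<in>marked. \<forall>y\<in>marked. x \<noteq> y \<longrightarrow> \<delta> \<le> dist x y"

text \<open>The removed chip nearer to \<open>p\<close> is free and at distance \<open>d\<close> from the marked points; the new
  chip \<open>l + r - p\<close> is at distance \<open>d\<close> from the other removed one. So the number of free chips
  drops unless the new chip is not free or is again at distance \<open>d\<close> from the marked points.\<close>
locale small_firing = separated_relaxation + vacant_point +
  assumes p_in_P: "p \<in> P" and small: "d < \<delta> / 3"
begin

lemma gap_chips_in_interval: "c \<in> {l, r} \<Longrightarrow> a \<le> c \<and> c \<le> b"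
  using left_chip_ge left_chip_less right_chip_le right_chip_greater p_inside by auto

lemma near_chip:
  assumes c: "c \<in> {l, r}" and near: "dist c p = d"
  shows "free c" "0 < \<mu> c" "infdist c marked = d"
proof -
  have p: "p \<in> marked" "\<forall>y\<in>marked. y \<noteq> p \<longrightarrow> \<delta> \<le> dist p y"
    using p_in_P separated by (auto simp: marked_def)
  have "c \<notin> marked"
  proof
    assume "c \<in> marked"
    moreover have "c \<noteq> p"
      using c left_chip_less right_chip_greater by auto
    ultimately have "\<delta> \<le> dist c p"
      using separated p(1) by blast
    then show False
      using near small gap_radius_pos by linarith
  qed
  then show "free c"
    using free_iff_not_marked gap_chips_in_interval[OF c] by blast
  then have "a < c" "c < b"
    by (simp_all add: free_def)
  then show "0 < \<mu> c"
    using c left_chip_pos right_chip_pos by blast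
  have "dist c p < \<delta> / 2"
    using near small gap_radius_pos by linarith
  then show "infdist c marked = d"
    using infdist_separated_eq[OF p] near by simp
qed

lemma far_chip:
  assumes c': "c' \<in> {l, r}" and "dist (l + r - p) c' = d" and "\<not> free c'"
  shows "infdist (l + r - p) marked = d"
proof -
  have "c' \<in> marked"
    using free_iff_not_marked gap_chips_in_interval[OF c'] assms(3) by blast
  then show ?thesis
    using infdist_separated_eq[OF \<open>c' \<in> marked\<close>, of \<delta> "l + r - p"] separated assms(2) small
      gap_radius_pos by (auto simp: dist_commute)
qed

lemma small_firing_effect:
  shows "\<exists>c. free c \<and> 0 < \<mu> c \<and> infdist c marked = d"
    and "free_chips (move \<mu> p) \<le> free_chips \<mu>"
    and "free_chips (move \<mu> p) = free_chips \<mu> \<Longrightarrow> free (l + r - p) \<Longrightarrow> infdist (l + r - p) marked = d"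
proof -
  obtain c c' where cc': "{c, c'} = {l, r}" "dist c p = d" "dist (l + r - p) c' = d"
  proof (cases "p - l \<le> r - p")
    case True
    then show ?thesis
      using that[of l r] left_chip_less by (simp add: gap_radius_def dist_real_def)
  next
    case False
    then show ?thesis
      using that[of r l] right_chip_greater by (simp add: gap_radius_def dist_real_def insert_commute)
  qed
  then have c: "c \<in> {l, r}" and c': "c' \<in> {l, r}"
    by auto
  have "l \<noteq> r"
    using left_chip_less right_chip_greater by simp
  then have "of_bool (free l) + of_bool (free r) = (of_bool (free c) + of_bool (free c') :: int)"
    using cc'(1) by (auto simp: doubleton_eq_iff)
  then have change: "free_chips (move \<mu> p)
      = free_chips \<mu> + of_bool (free (l + r - p)) - 1 - of_bool (free c')"
    using free_chips_move[OF admissible p_in_P vacant] near_chip(1)[OF c cc'(2)] by simp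
  show "\<exists>c. free c \<and> 0 < \<mu> c \<and> infdist c marked = d"
    using near_chip[OF c cc'(2)] by blast
  show "free_chips (move \<mu> p) \<le> free_chips \<mu>"
    using change by simp
  show "infdist (l + r - p) marked = d"
    if "free_chips (move \<mu> p) = free_chips \<mu>" "free (l + r - p)"
    using that change far_chip[OF c' cc'(3)] by (cases "free c'") simp_all
qed

end

context separated_relaxation
begin

lemma eventually_small_firings:
  obtains T where "\<And>m. T \<le> m \<Longrightarrow> fires m \<Longrightarrow> small_firing a b q P \<delta> (conf m) (q m)"
proof -
  have "finite {m. wide_firing (\<delta> / 3) m}"
    using delta_pos by (simp add: finite_wide_firings)
  then obtain T where T: "\<And>m. wide_firing (\<delta> / 3) m \<Longrightarrow> m < T"
    unfolding finite_nat_set_iff_bounded by blast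
  show ?thesis
  proof (rule that)
    fix m assume "T \<le> m" "fires m"
    then have "gap_radius (conf m) (q m) < \<delta> / 3"
      using T[of m] by (force simp: wide_firing_def)
    then show "small_firing a b q P \<delta> (conf m) (q m)"
      using \<open>fires m\<close> admissible_conf q_inside q_in_P
      by unfold_locales (simp_all add: fires_def)
  qed
qed

lemma eventually_free_chips_const:
  assumes small: "\<And>m. T \<le> m \<Longrightarrow> fires m \<Longrightarrow> small_firing a b q P \<delta> (conf m) (q m)"
  obtains T' where "T \<le> T'" "\<And>m. T' \<le> m \<Longrightarrow> free_chips (conf m) = free_chips (conf T')"
proof -
  let ?f = "\<lambda>m. nat (free_chips (conf m))"
  have "?f (Suc m) \<le> ?f m" if "T \<le> m" for m
  proof (cases "fires m")
    case True
    then interpret small_firing a b q P \<delta> "conf m" "q m"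
      using small that by blast
    show ?thesis
      using small_firing_effect(2) by simp
  qed (simp add: move_conf_if_not_fires)
  then obtain T' where "T \<le> T'" "\<And>m. T' \<le> m \<Longrightarrow> ?f m = ?f T'"
    using eventually_const_if_antimono[of T ?f] by blast
  then show ?thesis
    using that free_chips_nonneg[OF admissible_conf] by (metis eq_nat_nat_iff)
qed

text \<open>Once the number of free chips is constant, a firing only creates a free chip at the
  same distance from the marked points as an existing one.\<close>
lemma free_chip_distances_stable:
  assumes small: "\<And>m. T \<le> m \<Longrightarrow> fires m \<Longrightarrow> small_firing a b q P \<delta> (conf m) (q m)"
    and const: "\<And>m. T \<le> m \<Longrightarrow> free_chips (conf m) = free_chips (conf T)"
    and "T \<le> m"
  shows "free u \<Longrightarrow> 0 < conf m u \<Longrightarrow> infdist u marked \<in> (\<lambda>u. infdist u marked) ` {u. free u \<and> 0 < conf T u}"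
  using \<open>T \<le> m\<close>
proof (induction arbitrary: u rule: dec_induct)
  case (step n)
  show ?case
  proof (cases "fires n")
    case True
    then interpret small_firing a b q P \<delta> "conf n" "q n"
      using small step.hyps(1) by blast
    show ?thesis
    proof (cases "u = l + r - q n")
      case True
      have "free_chips (move (conf n) (q n)) = free_chips (conf n)"
        using const[of n] const[of "Suc n"] step.hyps(1) by simp
      then have "infdist u marked = d"
        using small_firing_effect(3) True step.prems(1) by blast
      then show ?thesis
        using small_firing_effect(1) step.IH by metis
    next
      case False
      have "q n \<noteq> u"
        using step.prems(1) q_in_P by (auto simp: free_def)
      then have "move (conf n) (q n) u \<le> conf n u"
        using False vacant by (simp add: move_apply)
      then show ?thesis
        using step.IH step.prems by simp
    qed
  next
    case False
    then show ?thesis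
      using step.IH step.prems by (simp add: move_conf_if_not_fires)
  qed
qed simp

lemma finite_firings: "finite {m. fires m}"
proof -
  obtain T where small: "\<And>m. T \<le> m \<Longrightarrow> fires m \<Longrightarrow> small_firing a b q P \<delta> (conf m) (q m)"
    using eventually_small_firings by blast
  obtain T' where "T \<le> T'" and const: "\<And>m. T' \<le> m \<Longrightarrow> free_chips (conf m) = free_chips (conf T')"
    using eventually_free_chips_const[OF small] by blast
  then have small': "\<And>m. T' \<le> m \<Longrightarrow> fires m \<Longrightarrow> small_firing a b q P \<delta> (conf m) (q m)"
    using small by simp
  define D where "D = (\<lambda>u. infdist u marked) ` {u. free u \<and> 0 < conf T' u}"
  define \<epsilon> where "\<epsilon> = Min (insert (\<delta> / 3) D)"
  have "{u. free u \<and> 0 < conf T' u} \<subseteq> supp (conf T')"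
    by (auto simp: supp_def)
  then have "finite D"
    using admissible_conf[of T'] unfolding D_def admissible_def by (auto intro: finite_subset)
  moreover have "0 < t" if "t \<in> D" for t
    using that finite_marked free_iff_not_marked
    by (auto simp: D_def free_def marked_def intro!: infdist_pos_not_in_closed finite_imp_closed)
  ultimately have "0 < \<epsilon>" and \<epsilon>_le: "\<And>t. t \<in> D \<Longrightarrow> \<epsilon> \<le> t"
    using delta_pos by (simp_all add: \<epsilon>_def Min_gr_iff)
  have "wide_firing \<epsilon> m" if "T' \<le> m" "fires m" for m
  proof -
    interpret small_firing a b q P \<delta> "conf m" "q m"
      using small' that by blast
    obtain c where "free c" "0 < conf m c" "infdist c marked = d"
      using small_firing_effect(1) by blast
    then have "d \<in> D"
      using free_chip_distances_stable[OF small' const that(1)] unfolding D_def by metis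
    then show ?thesis
      using \<epsilon>_le that(2) by (simp add: wide_firing_def)
  qed
  then have "{m. fires m} \<subseteq> {..<T'} \<union> {m. wide_firing \<epsilon> m}"
    by (auto simp: not_less)
  then show ?thesis
    using finite_wide_firings[OF \<open>0 < \<epsilon>\<close>] by (simp add: finite_subset)
qed

lemma conf_stabilizes: "\<exists>m0\<ge>1. \<forall>m\<ge>m0. conf m = conf m0"
proof -
  obtain m0 where m0: "\<And>m. fires m \<Longrightarrow> m < m0"
    using finite_firings unfolding finite_nat_set_iff_bounded by blast
  have "conf m = conf (Suc m0)" if "Suc m0 \<le> m" for m
    using that
  proof (induction rule: dec_induct)
    case (step n)
    then have "\<not> fires n"
      using m0 not_less Suc_leD by blast
    then have "conf (Suc n) = conf n"
      using move_conf_if_not_fires by simp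
    with step.IH show ?case
      by simp
  qed simp
  then show ?thesis
    by (intro exI[of _ "Suc m0"]) auto
qed

end

theorem mainTheorem1:
  fixes \<alpha> \<beta> :: real and n :: nat and p :: "nat \<Rightarrow> real" and k :: "nat \<Rightarrow> nat"
  assumes "\<alpha> < \<beta>"
    and "\<forall>i\<in>{1..n}. p i \<in> {\<alpha><..<\<beta>}"
    and "\<forall>m\<ge>1. k m \<in> {1..n}"
    and "\<forall>i\<in>{1..n}. infinite {m. m \<ge> 1 \<and> k m = i}"
  shows "\<exists>m0\<ge>1. \<forall>m\<ge>m0. \<forall>z\<in>{\<alpha>..\<beta>}. relax \<alpha> \<beta> p k m z = relax \<alpha> \<beta> p k m0 z"
proof -
  define q where "q m = p (k (Suc m))" for m
  interpret relaxation \<alpha> \<beta> q "p ` {1..n}"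
  proof unfold_locales
    show "q m \<in> p ` {1..n}" for m
      using assms(3) by (simp add: q_def)
  qed (use assms(2) in auto)
  obtain \<delta> where "0 < \<delta>" "\<forall>x\<in>marked. \<forall>y\<in>marked. x \<noteq> y \<longrightarrow> \<delta> \<le> dist x y"
    using finite_set_separated[OF finite_marked] by blast
  then interpret separated_relaxation \<alpha> \<beta> q "p ` {1..n}" \<delta>
    by unfold_locales
  obtain m0 where "1 \<le> m0" and stable: "\<forall>m\<ge>m0. conf m = conf m0"
    using conf_stabilizes by blast
  show ?thesis
  proof (intro exI[of _ m0] conjI allI impI ballI)
    fix m z assume "m0 \<le> m" "z \<in> {\<alpha>..\<beta>}"
    moreover from this have "conf m = conf m0"
      using stable by blast
    ultimately show "relax \<alpha> \<beta> p k m z = relax \<alpha> \<beta> p k m0 z"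
      using relax_eq_divisor_fun_conf[where p = p and k = k, OF q_def] by metis
  qed fact
qed

end
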